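(* Let $\ell$ be a positive integer and let $r_i=(a_i,b_i,c_i,d_i)\in\mathbb{Z}^4$, $i=1,2,3,4$, satisfy $r_i\cdot r_j=a_ia_j+b_ib_j+c_ic_j+d_id_j=\delta_{ij}\ell$ for all $i,j\in\{1,2,3,4\}$. Let $C_\ell=\{s_1r_1+s_2r_2+s_3r_3: s_1,s_2,s_3\in[0,1]\}$ be the three-dimensional cube spanned by the first three rows. Let $D_i=\gcd(a_i,b_i,c_i,d_i)$ for $i=1,\dots,4$, and for $1\le i<j\le 3$ let $\zeta_{ij}$ be the greatest common divisor of all $2\times 2$ minors of the matrix $\begin{pmatrix} a_i & b_i & c_i & d_i\\ a_j & b_j & c_j & d_j\end{pmatrix}$. Then for all positive integers $t$, $$\#(tC_\ell\cap\mathbb{Z}^4)=L(C_\ell,t)=\ell D_4 t^3+\Delta t^2+\Delta' t+1,$$ where $\Delta=\zeta_{12}+\zeta_{13}+\zeta_{23}$ and $\Delta'=D_1+D_2+D_3$.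
   Context: $\delta_{ij}$ is the Kronecker delta. *)

theory Defs
  imports "HOL-Analysis.Analysis" "HOL-Library.Numeral_Type"
begin

definition idot :: "int ^ 4 \<Rightarrow> int ^ 4 \<Rightarrow> int" where
  "idot u v = (\<Sum>k\<in>UNIV. u $ k * v $ k)"

definition vec_of_int4 :: "int ^ 4 \<Rightarrow> real ^ 4" where
  "vec_of_int4 u = (\<chi> k. real_of_int (u $ k))"

definition cube3 :: "(nat \<Rightarrow> int ^ 4) \<Rightarrow> (real ^ 4) set" where
  "cube3 r = {s1 *\<^sub>R vec_of_int4 (r 1) + s2 *\<^sub>R vec_of_int4 (r 2) + s3 *\<^sub>R vec_of_int4 (r 3)
              | s1 s2 s3. s1 \<in> {0..1} \<and> s2 \<in> {0..1} \<and> s3 \<in> {0..1}}"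

definition lattice_count :: "(real ^ 4) set \<Rightarrow> nat \<Rightarrow> nat" where
  "lattice_count C t = card {x :: int ^ 4. vec_of_int4 x \<in> ((\<lambda>y. real t *\<^sub>R y) ` C)}"

definition Dgcd :: "int ^ 4 \<Rightarrow> int" where
  "Dgcd u = Gcd (range (\<lambda>k. u $ k))"

definition zeta :: "int ^ 4 \<Rightarrow> int ^ 4 \<Rightarrow> int" where
  "zeta u v = Gcd {u $ k * v $ m - u $ m * v $ k | k m. k < m}"

end

theory Submission
  imports Defs "HOL-Library.Function_Algebras"
begin

text \<open>
  Since the rows satisfy \<open>R R\<^sup>T = l I\<close>, every \<open>x \<in> \<int>\<^sup>4\<close> satisfies \<open>l x = \<Sum>\<^sub>i (x \<bullet> r\<^sub>i) r\<^sub>i\<close>.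
  Hence the lattice points of \<open>t C\<close> correspond to the triples \<open>(a, b, c) \<in> [0, t l]\<^sup>3\<close> with
  \<open>a r\<^sub>1 + b r\<^sub>2 + c r\<^sub>3 \<equiv> 0 (mod l)\<close>, via \<open>a = x \<bullet> r\<^sub>1\<close> etc.  The indicator of this congruence is
  \<open>l\<close>-periodic in each variable, so the count is a cubic polynomial in \<open>t\<close> whose coefficients count
  the solutions in \<open>[0, l)\<^sup>k\<close> on the vertex, edges, faces and the whole of the cube.
  On an edge, \<open>l | a r\<^sub>i\<close> iff \<open>l/D\<^sub>i | a\<close> (Bezout), giving \<open>D\<^sub>i\<close> solutions.  On a face, the
  solvable \<open>a\<close> form the multiples of \<open>l/\<zeta>(r\<^sub>i, r\<^sub>j/D\<^sub>j)\<close> and each has \<open>D\<^sub>j\<close> partners \<open>b\<close>,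
  giving \<open>\<zeta>\<^sub>i\<^sub>j\<close>.  For the whole cube, the solutions \<open>y \<in> (\<int>/l)\<^sup>4\<close> of \<open>y R \<equiv> 0\<close> form a group of
  order \<open>l\<^sup>2\<close> (duality of additive characters), whose last coordinates are exactly the multiples
  of \<open>D\<^sub>4\<close>; the solutions with \<open>y\<^sub>4 = 0\<close> therefore number \<open>l D\<^sub>4\<close>.
\<close>

section \<open>Residue boxes\<close>

definition residue_box :: "int \<Rightarrow> ('k \<Rightarrow> int) set" where
  "residue_box l = {y. \<forall>k. 0 \<le> y k \<and> y k < l}"

lemma residue_box_eq_PiE: "residue_box l = PiE UNIV (\<lambda>_. {0..<l})"
  unfolding residue_box_def by (auto simp: PiE_def extensional_def)

lemma finite_residue_box: "finite (residue_box l :: ('k::finite \<Rightarrow> int) set)"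
  unfolding residue_box_eq_PiE by (rule finite_PiE) auto

lemma card_residue_box: "card (residue_box l :: ('k::finite \<Rightarrow> int) set) = nat l ^ CARD('k)"
  unfolding residue_box_eq_PiE by (simp add: card_PiE)

definition vec_mod :: "int \<Rightarrow> ('k \<Rightarrow> int) \<Rightarrow> ('k \<Rightarrow> int)" where
  "vec_mod l y = (\<lambda>k. y k mod l)"

lemma vec_mod_in_residue_box: "l > 0 \<Longrightarrow> vec_mod l y \<in> residue_box l"
  by (simp add: vec_mod_def residue_box_def)

lemma vec_mod_residue_box: "y \<in> residue_box l \<Longrightarrow> vec_mod l y = y"
  by (simp add: vec_mod_def residue_box_def fun_eq_iff)

lemma vec_mod_add_diff: "vec_mod l (vec_mod l (y + h) - h) = vec_mod l y"
  by (simp add: vec_mod_def fun_eq_iff mod_diff_left_eq)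

lemma vec_mod_diff_add: "vec_mod l (vec_mod l (y - h) + h) = vec_mod l y"
  by (simp add: vec_mod_def fun_eq_iff mod_add_left_eq)

text \<open>
  A subset of \<open>(\<int>/l)\<^sup>k\<close> closed under addition and subtraction is a group; if \<open>\<phi>\<close> is constant
  exactly on its cosets, all fibres of \<open>\<phi>\<close> are translates of the kernel.
\<close>

lemma card_fibre_eq_card_kernel:
  fixes S :: "('k::finite \<Rightarrow> int) set" and \<phi> :: "('k \<Rightarrow> int) \<Rightarrow> 'b"
  assumes "S \<subseteq> residue_box l" "h \<in> S"
    and add: "\<And>y h. y \<in> S \<Longrightarrow> h \<in> S \<Longrightarrow> vec_mod l (y + h) \<in> S"
    and diff: "\<And>y h. y \<in> S \<Longrightarrow> h \<in> S \<Longrightarrow> vec_mod l (y - h) \<in> S"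
    and coset: "\<And>y h. y \<in> S \<Longrightarrow> h \<in> S \<Longrightarrow> \<phi> (vec_mod l (y - h)) = \<phi> 0 \<longleftrightarrow> \<phi> y = \<phi> h"
  shows "card {y \<in> S. \<phi> y = \<phi> h} = card {y \<in> S. \<phi> y = \<phi> 0}"
proof -
  have inv1: "vec_mod l (vec_mod l (y + h) - h) = y" if "y \<in> S" for y
    using that assms(1) vec_mod_residue_box[of y l] by (auto simp: vec_mod_add_diff)
  have inv2: "vec_mod l (vec_mod l (y - h) + h) = y" if "y \<in> S" for y
    using that assms(1) vec_mod_residue_box[of y l] by (auto simp: vec_mod_diff_add)
  have "bij_betw (\<lambda>y. vec_mod l (y + h)) {y \<in> S. \<phi> y = \<phi> 0} {y \<in> S. \<phi> y = \<phi> h}"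
  proof (rule bij_betw_byWitness[where f' = "\<lambda>y. vec_mod l (y - h)"])
    show "\<forall>y\<in>{y \<in> S. \<phi> y = \<phi> 0}. vec_mod l (vec_mod l (y + h) - h) = y"
      using inv1 by blast
    show "\<forall>y\<in>{y \<in> S. \<phi> y = \<phi> h}. vec_mod l (vec_mod l (y - h) + h) = y"
      using inv2 by blast
    show "(\<lambda>y. vec_mod l (y + h)) ` {y \<in> S. \<phi> y = \<phi> 0} \<subseteq> {y \<in> S. \<phi> y = \<phi> h}"
    proof
      fix x assume "x \<in> (\<lambda>y. vec_mod l (y + h)) ` {y \<in> S. \<phi> y = \<phi> 0}"
      then obtain y where y: "y \<in> S" "\<phi> y = \<phi> 0" and x: "x = vec_mod l (y + h)"
        by blast
      have "x \<in> S"
        using add[OF y(1) assms(2)] x by simp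
      moreover have "\<phi> x = \<phi> h"
        using coset[OF \<open>x \<in> S\<close> assms(2)] inv1[OF y(1)] y(2) x by simp
      ultimately show "x \<in> {y \<in> S. \<phi> y = \<phi> h}"
        by simp
    qed
    show "(\<lambda>y. vec_mod l (y - h)) ` {y \<in> S. \<phi> y = \<phi> h} \<subseteq> {y \<in> S. \<phi> y = \<phi> 0}"
      using diff coset assms(2) by auto
  qed
  then show ?thesis
    by (rule bij_betw_same_card[symmetric])
qed

lemma card_eq_card_image_mult_card_kernel:
  fixes S :: "('k::finite \<Rightarrow> int) set" and \<phi> :: "('k \<Rightarrow> int) \<Rightarrow> 'b"
  assumes "S \<subseteq> residue_box l"
    and add: "\<And>y h. y \<in> S \<Longrightarrow> h \<in> S \<Longrightarrow> vec_mod l (y + h) \<in> S"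
    and diff: "\<And>y h. y \<in> S \<Longrightarrow> h \<in> S \<Longrightarrow> vec_mod l (y - h) \<in> S"
    and coset: "\<And>y h. y \<in> S \<Longrightarrow> h \<in> S \<Longrightarrow> \<phi> (vec_mod l (y - h)) = \<phi> 0 \<longleftrightarrow> \<phi> y = \<phi> h"
  shows "card S = card (\<phi> ` S) * card {y \<in> S. \<phi> y = \<phi> 0}"
proof -
  have "finite S"
    using assms(1) finite_residue_box finite_subset by blast
  have "S = (\<Union>v\<in>\<phi> ` S. {y \<in> S. \<phi> y = v})"
    by auto
  also have "card \<dots> = (\<Sum>v\<in>\<phi> ` S. card {y \<in> S. \<phi> y = v})"
    by (rule card_UN_disjoint) (use \<open>finite S\<close> in auto)
  also have "\<dots> = (\<Sum>v\<in>\<phi> ` S. card {y \<in> S. \<phi> y = \<phi> 0})"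
  proof (rule sum.cong)
    fix v assume "v \<in> \<phi> ` S"
    then obtain h where h: "h \<in> S" "v = \<phi> h"
      by blast
    show "card {y \<in> S. \<phi> y = v} = card {y \<in> S. \<phi> y = \<phi> 0}"
      unfolding h(2) by (rule card_fibre_eq_card_kernel[OF assms(1) h(1) add diff coset])
  qed simp
  finally show ?thesis
    by simp
qed

lemma sum_mod_mult_mod: "(\<Sum>i\<in>S. (y i mod l) * c i) mod l = (\<Sum>i\<in>S. y i * c i) mod (l :: int)"
  by (subst (1 2) mod_sum_eq[symmetric]) (simp add: mod_mult_left_eq)

lemma mod_diff_eq_0_iff_eq:
  fixes a b l :: int
  assumes "0 \<le> a" "a < l" "0 \<le> b" "b < l"
  shows "(a - b) mod l = 0 \<longleftrightarrow> a = b"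
proof -
  have "(a - b) mod l = 0 \<longleftrightarrow> a mod l = b mod l"
    by (simp add: mod_eq_dvd_iff dvd_eq_mod_eq_0)
  then show ?thesis
    using assms by simp
qed

section \<open>Additive characters and a duality of solution counts\<close>

definition add_char :: "int \<Rightarrow> int \<Rightarrow> complex" where
  "add_char l x = exp (2 * of_real pi * \<i> * of_int x / of_int l)"

lemma add_char_add: "add_char l (x + y) = add_char l x * add_char l y"
  unfolding add_char_def by (simp add: exp_add[symmetric] add_divide_distrib distrib_left)

lemma add_char_sum: "add_char l (sum f A) = (\<Prod>x\<in>A. add_char l (f x))"
proof (induction A rule: infinite_finite_induct)
  case (insert x F)
  then show ?case by (simp add: add_char_add)
qed (simp_all add: add_char_def)

lemma add_char_mult_nonneg:
  assumes "c \<ge> 0"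
  shows "add_char l (c * x) = add_char l x ^ nat c"
  using add_char_sum[of l "\<lambda>_. x" "{..<nat c}"] assms by simp

lemma add_char_eq_1_iff:
  assumes "l > 0"
  shows "add_char l x = 1 \<longleftrightarrow> l dvd x"
proof
  assume "add_char l x = 1"
  then obtain n :: int where "Im (2 * of_real pi * \<i> * of_int x / of_int l) = of_int (2 * n) * pi"
    unfolding add_char_def exp_eq_1 by blast
  then have "2 * pi * x / l = 2 * n * pi"
    by (simp add: Im_divide_of_real[symmetric] del: Im_divide_of_real)
  with assms have "real_of_int x = real_of_int (n * l)"
    by (simp add: field_simps)
  then show "l dvd x"
    by (simp only: of_int_eq_iff) simp
next
  assume "l dvd x"
  then obtain n where "x = l * n" ..
  with assms have "2 * of_real pi * \<i> * of_int x / of_int l = of_int n * (2 * of_real pi * \<i>)"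
    by (simp add: field_simps)
  then show "add_char l x = 1"
    unfolding add_char_def by (simp add: exp_eq_1)
qed

lemma sum_add_char_mult:
  assumes "l > 0"
  shows "(\<Sum>c\<in>{0..<l}. add_char l (c * x)) = (if l dvd x then of_int l else 0)"
proof -
  have "(\<Sum>c\<in>{0..<l}. add_char l (c * x)) = (\<Sum>c<nat l. add_char l x ^ c)"
    by (rule sum.reindex_bij_witness[of _ int nat]) (use assms in \<open>auto simp: add_char_mult_nonneg\<close>)
  also have "\<dots> = (if l dvd x then of_int l else 0)"
  proof (cases "l dvd x")
    case False
    then have "add_char l x \<noteq> 1"
      using add_char_eq_1_iff[OF assms] by simp
    moreover have "add_char l x ^ nat l = 1"
      using add_char_eq_1_iff[OF assms, of "l * x"] assms
      by (simp add: add_char_mult_nonneg)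
    ultimately show ?thesis
      using False geometric_sum[of "add_char l x" "nat l"] by simp
  qed (use assms add_char_eq_1_iff[OF assms, of x] in simp)
  finally show ?thesis .
qed

lemma sum_residue_box_add_char:
  fixes x :: "'k::finite \<Rightarrow> int"
  assumes "l > 0"
  shows "(\<Sum>y\<in>residue_box l. add_char l (\<Sum>k\<in>UNIV. y k * x k))
           = (if \<forall>k. l dvd x k then of_int l ^ CARD('k) else 0)"
proof -
  have "(\<Sum>y\<in>residue_box l. add_char l (\<Sum>k\<in>UNIV. y k * x k))
      = (\<Prod>k\<in>UNIV. \<Sum>c\<in>{0..<l}. add_char l (c * x k))"
    unfolding residue_box_eq_PiE add_char_sum by (rule prod_sum_PiE[symmetric]) auto
  also have "\<dots> = (\<Prod>k\<in>UNIV. if l dvd x k then of_int l else 0)"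
    by (simp add: sum_add_char_mult[OF assms])
  also have "\<dots> = (if \<forall>k. l dvd x k then of_int l ^ CARD('k) else 0)"
    by (auto simp: prod_zero_iff)
  finally show ?thesis .
qed

lemma sum_sum_bilinear_swap:
  "(\<Sum>i\<in>I. \<Sum>j\<in>J. y i * z j * (A i j :: 'a::comm_ring)) = (\<Sum>j\<in>J. z j * (\<Sum>i\<in>I. y i * A i j))"
  unfolding sum_distrib_left by (rule trans[OF sum.swap]) (simp add: ac_simps)

text \<open>Double counting of \<open>\<Sum>\<^sub>y \<Sum>\<^sub>z e(y A z / l)\<close> over residue boxes.\<close>

lemma card_kernel_mod_transpose:
  fixes A :: "'i::finite \<Rightarrow> 'j::finite \<Rightarrow> int"
  assumes "l > 0"
  shows "l ^ CARD('j) * card {y \<in> residue_box l. \<forall>j. l dvd (\<Sum>i\<in>UNIV. y i * A i j)}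
       = l ^ CARD('i) * card {z \<in> residue_box l. \<forall>i. l dvd (\<Sum>j\<in>UNIV. z j * A i j)}"
    (is "?L = ?R")
proof -
  let ?F = "\<lambda>y z. add_char l (\<Sum>i\<in>UNIV. \<Sum>j\<in>UNIV. y i * z j * A i j)"
  have "(\<Sum>y\<in>residue_box l. \<Sum>z\<in>residue_box l. ?F y z)
      = (\<Sum>y\<in>residue_box l. \<Sum>z\<in>residue_box l. add_char l (\<Sum>j\<in>UNIV. z j * (\<Sum>i\<in>UNIV. y i * A i j)))"
    by (simp only: sum_sum_bilinear_swap)
  also have "\<dots> = of_int ?L"
    by (simp add: sum_residue_box_add_char[OF assms] sum.inter_filter[symmetric] finite_residue_box)
  finally have lhs: "(\<Sum>y\<in>residue_box l. \<Sum>z\<in>residue_box l. ?F y z) = \<dots>" .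
  have "(\<Sum>y\<in>residue_box l. \<Sum>z\<in>residue_box l. ?F y z)
      = (\<Sum>z\<in>residue_box l. \<Sum>y\<in>residue_box l. add_char l (\<Sum>i\<in>UNIV. y i * (\<Sum>j\<in>UNIV. z j * A i j)))"
    by (subst sum.swap) (simp only: sum_distrib_left mult.assoc)
  also have "\<dots> = of_int ?R"
    by (simp add: sum_residue_box_add_char[OF assms] sum.inter_filter[symmetric] finite_residue_box)
  finally have "(of_int ?L :: complex) = of_int ?R"
    using lhs by simp
  then show ?thesis
    by (simp only: of_int_eq_iff)
qed

section \<open>Coordinate gcds and edge solutions\<close>

lemma Dgcd_dvd: "Dgcd u dvd u $ k"
  unfolding Dgcd_def by (rule Gcd_dvd) auto

lemma Dgcd_nonneg: "0 \<le> Dgcd u"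
  unfolding Dgcd_def by simp

lemma Gcd_image_bezout:
  fixes f :: "'a \<Rightarrow> int"
  assumes "finite I"
  shows "\<exists>w. (\<Sum>k\<in>I. w k * f k) = Gcd (f ` I)"
  using assms
proof (induction I rule: finite_induct)
  case (insert i I)
  then obtain w where w: "(\<Sum>k\<in>I. w k * f k) = Gcd (f ` I)"
    by blast
  obtain a b where ab: "a * f i + b * Gcd (f ` I) = gcd (f i) (Gcd (f ` I))"
    using bezout_int by blast
  define w' where "w' = (\<lambda>k. if k = i then a else b * w k)"
  have "(\<Sum>k\<in>insert i I. w' k * f k) = a * f i + (\<Sum>k\<in>I. b * (w k * f k))"
    using insert.hyps by (simp add: w'_def mult.assoc) (intro sum.cong, auto)
  also have "\<dots> = gcd (f i) (Gcd (f ` I))"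
    using ab w by (simp add: sum_distrib_left[symmetric])
  finally have "(\<Sum>k\<in>insert i I. w' k * f k) = Gcd (f ` insert i I)"
    by simp
  then show ?case
    by blast
qed simp

lemma Dgcd_bezout: "\<exists>w :: int ^ 4. (\<Sum>k\<in>UNIV. w $ k * u $ k) = Dgcd u"
proof -
  obtain w where "(\<Sum>k\<in>UNIV. w k * u $ k) = Dgcd u"
    using Gcd_image_bezout[of "UNIV :: 4 set" "\<lambda>k. u $ k"] by (auto simp: Dgcd_def)
  then have "(\<Sum>k\<in>UNIV. (\<chi> k. w k) $ k * u $ k) = Dgcd u"
    by simp
  then show ?thesis ..
qed

lemma Dgcd_primitive:
  assumes "Dgcd v \<noteq> 0"
  obtains v' w :: "int ^ 4" where "\<And>k. v $ k = Dgcd v * v' $ k" "(\<Sum>k\<in>UNIV. w $ k * v' $ k) = 1"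
proof -
  define v' :: "int ^ 4" where "v' = (\<chi> k. v $ k div Dgcd v)"
  have v: "v $ k = Dgcd v * v' $ k" for k
    using Dgcd_dvd[of v k] by (simp add: v'_def)
  obtain w :: "int ^ 4" where "(\<Sum>k\<in>UNIV. w $ k * v $ k) = Dgcd v"
    using Dgcd_bezout by blast
  then have "Dgcd v * (\<Sum>k\<in>UNIV. w $ k * v' $ k) = Dgcd v * 1"
    by (simp add: v sum_distrib_left ac_simps)
  then have "(\<Sum>k\<in>UNIV. w $ k * v' $ k) = 1"
    using assms by (simp only: mult_cancel_left) simp
  with v show ?thesis
    by (rule that)
qed

lemma dvd_all_mult_iff_dvd_mult_Dgcd: "(\<forall>k. l dvd c * u $ k) \<longleftrightarrow> l dvd c * Dgcd u"
proof
  assume H: "\<forall>k. l dvd c * u $ k"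
  obtain w :: "int ^ 4" where w: "(\<Sum>k\<in>UNIV. w $ k * u $ k) = Dgcd u"
    using Dgcd_bezout by blast
  have "c * Dgcd u = (\<Sum>k\<in>UNIV. w $ k * (c * u $ k))"
    by (simp add: w[symmetric] sum_distrib_left ac_simps)
  also have "l dvd \<dots>"
    using H by (intro dvd_sum) auto
  finally show "l dvd c * Dgcd u" .
next
  assume "l dvd c * Dgcd u"
  then show "\<forall>k. l dvd c * u $ k"
    using Dgcd_dvd by (meson dvd_trans mult_dvd_mono dvd_refl)
qed

lemma Dgcd_pos_dvd_idot_self:
  assumes "idot u u = l" "l > 0"
  shows "Dgcd u > 0" "Dgcd u dvd l"
proof -
  have "Dgcd u * Dgcd u dvd idot u u"
    unfolding idot_def by (intro dvd_sum) (simp add: Dgcd_dvd mult_dvd_mono)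
  then show "Dgcd u dvd l"
    using assms by (metis dvd_mult_left)
  then show "Dgcd u > 0"
    using assms Dgcd_nonneg[of u] by (cases "Dgcd u = 0") auto
qed

lemma card_congruence_class:
  fixes m l b0 :: int
  assumes "m > 0" "m dvd l"
  shows "card {b \<in> {0..<l}. m dvd b - b0} = nat (l div m)"
proof -
  obtain q where q: "l = m * q"
    using assms by blast
  have "{b \<in> {0..<l}. m dvd b - b0} = (\<lambda>j. b0 mod m + m * j) ` {0..<q}"
  proof (intro equalityI subsetI)
    fix b assume b: "b \<in> {b \<in> {0..<l}. m dvd b - b0}"
    then have "b = b0 mod m + m * (b div m)"
      by (metis mod_eq_dvd_iff mult_div_mod_eq add.commute mem_Collect_eq)
    moreover have "b < q * m" "0 \<le> b"
      using b q by (simp_all add: mult.commute)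
    then have "b div m \<in> {0..<q}"
      using assms by (simp add: pos_imp_zdiv_nonneg_iff)
        (smt (verit) minus_div_mult_eq_mod mult_right_less_imp_less pos_mod_sign)
    ultimately show "b \<in> (\<lambda>j. b0 mod m + m * j) ` {0..<q}"
      by blast
  next
    fix b assume "b \<in> (\<lambda>j. b0 mod m + m * j) ` {0..<q}"
    then obtain j where j: "0 \<le> j" "j < q" "b = b0 mod m + m * j"
      by auto
    have "m * j \<le> m * (q - 1)"
      using j assms by (intro mult_left_mono) auto
    moreover have "0 \<le> b0 mod m" "b0 mod m < m"
      using assms by simp_all
    ultimately have "0 \<le> b \<and> b < l"
      using j q by (simp add: algebra_simps)
    moreover have "b - b0 = m * (j - b0 div m)"
      using j(3) by (simp add: minus_mod_eq_mult_div[symmetric] algebra_simps)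
    ultimately show "b \<in> {b \<in> {0..<l}. m dvd b - b0}"
      by simp
  qed
  also have "card \<dots> = card {0..<q}"
    using assms by (intro card_image) (auto simp: inj_on_def)
  finally show ?thesis
    using q assms by simp
qed

lemma card_coset_solutions:
  fixes x v :: "int ^ 4"
  assumes "l > 0" "Dgcd v dvd l" and b0: "\<forall>k. l dvd x $ k + b0 * v $ k"
  shows "card {b \<in> {0..<l}. \<forall>k. l dvd x $ k + b * v $ k} = nat (Dgcd v)"
proof -
  define D where "D = Dgcd v"
  obtain m where lm: "l = D * m"
    using assms(2) by (auto simp: D_def)
  have "D > 0" "m > 0"
    using assms(1) lm Dgcd_nonneg[of v] by (auto simp: D_def zero_less_mult_iff)
  have "(\<forall>k. l dvd x $ k + b * v $ k) \<longleftrightarrow> m dvd b - b0" for b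
  proof -
    have "x $ k + b * v $ k = (x $ k + b0 * v $ k) + (b - b0) * v $ k" for k
      by (simp add: algebra_simps)
    then have "(\<forall>k. l dvd x $ k + b * v $ k) \<longleftrightarrow> (\<forall>k. l dvd (b - b0) * v $ k)"
      using b0 by (metis dvd_add_right_iff)
    also have "\<dots> \<longleftrightarrow> D * m dvd (b - b0) * D"
      by (simp add: dvd_all_mult_iff_dvd_mult_Dgcd lm D_def)
    also have "\<dots> \<longleftrightarrow> m dvd b - b0"
      using \<open>D > 0\<close> by (simp add: mult.commute)
    finally show ?thesis .
  qed
  then have "card {b \<in> {0..<l}. \<forall>k. l dvd x $ k + b * v $ k} = card {b \<in> {0..<l}. m dvd b - b0}"
    by simp
  also have "\<dots> = nat D"
    using card_congruence_class[OF \<open>m > 0\<close>, of l b0] lm \<open>m > 0\<close> by simp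
  finally show ?thesis
    by (simp add: D_def)
qed

section \<open>Minors and face solutions\<close>

lemma idot_commute: "idot u v = idot v u"
  unfolding idot_def by (simp add: mult.commute)

definition minor :: "int ^ 4 \<Rightarrow> int ^ 4 \<Rightarrow> 4 \<Rightarrow> 4 \<Rightarrow> int" where
  "minor u v k m = u $ k * v $ m - u $ m * v $ k"

lemma zeta_eq_Gcd_minor: "zeta u v = Gcd {minor u v k m | k m. k < m}"
  unfolding zeta_def minor_def by simp

lemma zeta_nonneg: "0 \<le> zeta u v"
  unfolding zeta_def by simp

lemma zeta_dvd_minor: "zeta u v dvd minor u v k m"
proof (cases k m rule: linorder_cases)
  case less
  then show ?thesis
    unfolding zeta_eq_Gcd_minor by (intro Gcd_dvd) blast
next
  case greater
  then have "zeta u v dvd minor u v m k"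
    unfolding zeta_eq_Gcd_minor by (intro Gcd_dvd) blast
  then show ?thesis
    by (simp add: minor_def dvd_diff_commute)
qed (simp add: minor_def)

lemma dvd_mult_zeta:
  assumes "\<And>k m. l dvd c * minor u v k m"
  shows "l dvd c * zeta u v"
proof -
  have "l dvd Gcd ((*) c ` {minor u v k m | k m. k < m})"
    using assms by (intro Gcd_greatest) blast
  then show ?thesis
    by (simp add: Gcd_mult zeta_eq_Gcd_minor)
qed

lemma zeta_scale_right:
  assumes "\<And>k. v $ k = D * v' $ k" "D \<ge> 0"
  shows "zeta u v = D * zeta u v'"
proof -
  have scale: "minor u v k m = D * minor u v' k m" for k m
    using assms(1) by (simp add: minor_def algebra_simps)
  have "{minor u v k m | k m. k < m} = (*) D ` {minor u v' k m | k m. k < m}"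
    unfolding scale by blast
  then show ?thesis
    using assms(2) zeta_nonneg[of u v'] by (simp add: zeta_eq_Gcd_minor Gcd_mult abs_mult)
qed

lemma dvd_mult_zeta_of_solution:
  assumes "\<forall>k. l dvd a * u $ k + b * v $ k" "\<And>k. v $ k = D * v' $ k"
  shows "l dvd a * zeta u v'"
proof (rule dvd_mult_zeta)
  fix k m
  have "a * minor u v' k m = (a * u $ k + b * v $ k) * v' $ m - (a * u $ m + b * v $ m) * v' $ k"
    by (simp add: minor_def assms(2) algebra_simps)
  then show "l dvd a * minor u v' k m"
    using assms(1) by simp
qed

text \<open>\<open>u - (u \<bullet> w) v'\<close> is a combination of the minors of \<open>(u, v')\<close> when \<open>w \<bullet> v' = 1\<close>.\<close>

lemma zeta_decomposition:
  assumes "(\<Sum>k\<in>UNIV. w $ k * v' $ k) = 1"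
  obtains f :: "int ^ 4" where "\<And>k. u $ k = zeta u v' * f $ k + idot u w * v' $ k"
proof -
  have "u $ k - idot u w * v' $ k = (\<Sum>m\<in>UNIV. w $ m * minor u v' k m)" for k
  proof -
    have "(\<Sum>m\<in>UNIV. w $ m * minor u v' k m)
        = u $ k * (\<Sum>m\<in>UNIV. w $ m * v' $ m) - v' $ k * (\<Sum>m\<in>UNIV. u $ m * w $ m)"
      by (simp add: minor_def sum_distrib_left sum_subtractf algebra_simps)
    then show ?thesis
      using assms by (simp add: idot_def)
  qed
  then have "zeta u v' dvd u $ k - idot u w * v' $ k" for k
    by (simp add: dvd_sum dvd_mult zeta_dvd_minor)
  then have "u $ k = zeta u v' * (\<chi> k. (u $ k - idot u w * v' $ k) div zeta u v') $ k + idot u w * v' $ k" for k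
    by simp
  then show ?thesis
    by (rule that)
qed

text \<open>
  Writing \<open>u = E f + c v'\<close> with \<open>E = \<zeta>(u, v')\<close>, the first coordinates of the solutions are the
  multiples of \<open>g = f \<bullet> u\<close>, and \<open>l = u \<bullet> u = E g\<close>.
\<close>

lemma face_solution_of_dvd:
  fixes u v v' f :: "int ^ 4"
  assumes u: "\<And>k. u $ k = E * f $ k + c * v' $ k" and v: "\<And>k. v $ k = D * v' $ k"
    and l: "l = E * g" and key: "g * c + D * D * idot f v' = 0"
  shows "\<forall>k. l dvd (g * n) * u $ k + (n * D * idot f v') * v $ k"
proof
  fix k
  have "(g * n) * u $ k + (n * D * idot f v') * v $ k
      = n * (g * E) * f $ k + n * v' $ k * (g * c + D * D * idot f v')"
    by (simp add: u v algebra_simps)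
  also have "\<dots> = l * (n * f $ k)"
    by (simp only: key l mult_zero_right add_0_right) (simp add: ac_simps)
  finally show "l dvd (g * n) * u $ k + (n * D * idot f v') * v $ k"
    by simp
qed

lemma face_solvable_iff:
  fixes u v v' w :: "int ^ 4"
  assumes l: "l > 0" and uu: "idot u u = l" and v: "\<And>k. v $ k = D * v' $ k"
    and vv': "D * D * idot v' v' = l" and uv': "idot u v' = 0" and w: "(\<Sum>k\<in>UNIV. w $ k * v' $ k) = 1"
  obtains g where "l = g * zeta u v'" "g > 0"
    and "\<And>a. (\<exists>b. \<forall>k. l dvd a * u $ k + b * v $ k) \<longleftrightarrow> g dvd a"
proof -
  define E where "E = zeta u v'"
  define c where "c = idot u w"
  obtain f where u: "\<And>k. u $ k = E * f $ k + c * v' $ k"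
    using zeta_decomposition[OF w] unfolding E_def c_def by blast
  have idot_u: "idot u x = E * idot f x + c * idot v' x" for x
    by (simp add: idot_def u algebra_simps sum.distrib sum_distrib_left)
  define g where "g = idot f u"
  have l_eq: "l = E * g"
    using idot_u[of u] uu uv' by (simp add: g_def idot_commute[of v'])
  have key: "g * c + D * D * idot f v' = 0"
  proof -
    have "l * (D * D * idot f v') = g * D * D * (E * idot f v')"
      by (subst l_eq) (simp add: algebra_simps)
    moreover have "l * (g * c) = g * D * D * (c * idot v' v')"
      by (subst vv'[symmetric]) (simp add: algebra_simps)
    ultimately have "l * (g * c + D * D * idot f v') = g * D * D * (E * idot f v' + c * idot v' v')"
      by (simp only: distrib_left add.commute)
    then show ?thesis
      using idot_u[of v'] uv' l by simp
  qed
  have "g > 0" "E > 0"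
    using l l_eq zeta_nonneg[of u v'] by (auto simp: E_def zero_less_mult_iff)
  moreover have "(\<exists>b. \<forall>k. l dvd a * u $ k + b * v $ k) \<longleftrightarrow> g dvd a" for a
  proof
    assume "\<exists>b. \<forall>k. l dvd a * u $ k + b * v $ k"
    then obtain b where "\<forall>k. l dvd a * u $ k + b * v $ k" ..
    then have "l dvd a * E"
      unfolding E_def by (rule dvd_mult_zeta_of_solution[OF _ v])
    then have "g * E dvd a * E"
      by (simp add: l_eq mult.commute)
    then show "g dvd a"
      using \<open>E > 0\<close> by simp
  next
    assume "g dvd a"
    then obtain n where n: "a = g * n" ..
    have "\<forall>k. l dvd a * u $ k + (n * D * idot f v') * v $ k"
      unfolding n by (rule face_solution_of_dvd[OF u v l_eq key])
    then show "\<exists>b. \<forall>k. l dvd a * u $ k + b * v $ k" ..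
  qed
  ultimately show ?thesis
    using that l_eq by (simp add: E_def mult.commute)
qed

lemma card_face_solutions:
  fixes u v :: "int ^ 4"
  assumes l: "l > 0" and uu: "idot u u = l" and vv: "idot v v = l" and uv: "idot u v = 0"
  shows "card (SIGMA a:{0..<l}. {b \<in> {0..<l}. \<forall>k. l dvd a * u $ k + b * v $ k}) = nat (zeta u v)"
proof -
  define D where "D = Dgcd v"
  have D: "D > 0" "D dvd l"
    using Dgcd_pos_dvd_idot_self[OF vv l] by (auto simp: D_def)
  obtain v' w :: "int ^ 4" where v: "\<And>k. v $ k = D * v' $ k" and w: "(\<Sum>k\<in>UNIV. w $ k * v' $ k) = 1"
    using Dgcd_primitive[of v] D by (auto simp: D_def)
  have "D * D * idot v' v' = l" "D * idot u v' = 0"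
    using vv uv by (simp_all add: idot_def v sum_distrib_left ac_simps)
  then obtain g where g: "l = g * zeta u v'" "g > 0"
    and solvable: "\<And>a. (\<exists>b. \<forall>k. l dvd a * u $ k + b * v $ k) \<longleftrightarrow> g dvd a"
    using face_solvable_iff[OF l uu v _ _ w] D by auto
  have fibre: "card {b \<in> {0..<l}. \<forall>k. l dvd a * u $ k + b * v $ k} = (if g dvd a then nat D else 0)" for a
  proof (cases "g dvd a")
    case True
    then obtain b0 where "\<forall>k. l dvd a * u $ k + b0 * v $ k"
      using solvable by blast
    then show ?thesis
      using card_coset_solutions[OF l, of v "\<chi> k. a * u $ k" b0] D True by (simp add: D_def)
  next
    case False
    then have empty: "{b \<in> {0..<l}. \<forall>k. l dvd a * u $ k + b * v $ k} = {}"
      using solvable by blast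
    show ?thesis
      unfolding empty using False by simp
  qed
  have "card (SIGMA a:{0..<l}. {b \<in> {0..<l}. \<forall>k. l dvd a * u $ k + b * v $ k})
      = (\<Sum>a\<in>{0..<l}. card {b \<in> {0..<l}. \<forall>k. l dvd a * u $ k + b * v $ k})"
    by (rule card_SigmaI) (simp_all del: atLeastLessThan_iff)
  also have "\<dots> = card {a \<in> {0..<l}. g dvd a - 0} * nat D"
    by (simp add: fibre sum.inter_filter[symmetric] del: atLeastLessThan_iff)
  also have "\<dots> = nat (zeta u v' * D)"
    using card_congruence_class[of g l 0] g zeta_nonneg[of u v'] D by (simp add: nat_mult_distrib)
  also have "zeta u v' * D = zeta u v"
    using zeta_scale_right[OF v] D by simp
  finally show ?thesis .
qed

section \<open>Periodic sums\<close>

lemma periodic_add_mult: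
  assumes "\<And>a. g (a + l) = g a"
  shows "g (a + int t * l) = g (a :: int)"
proof (induction t)
  case (Suc t)
  have "g (a + int (Suc t) * l) = g ((a + int t * l) + l)"
    by (simp add: algebra_simps)
  then show ?case
    using Suc assms by simp
qed simp

lemma sum_periodic_atLeastLessThan:
  fixes g :: "int \<Rightarrow> 'a::comm_ring_1"
  assumes per: "\<And>a. g (a + l) = g a" and "l \<ge> 0"
  shows "(\<Sum>a\<in>{0..<int t * l}. g a) = of_nat t * (\<Sum>a\<in>{0..<l}. g a)"
proof (induction t)
  case (Suc t)
  have "{0..<int (Suc t) * l} = {0..<int t * l} \<union> {int t * l..<int t * l + l}"
    using assms(2) by (subst ivl_disj_un_two(3)) (simp_all add: algebra_simps)
  then have "(\<Sum>a\<in>{0..<int (Suc t) * l}. g a)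
      = (\<Sum>a\<in>{0..<int t * l}. g a) + (\<Sum>a\<in>{int t * l..<int t * l + l}. g a)"
    by (simp add: sum.union_disjoint)
  also have "(\<Sum>a\<in>{int t * l..<int t * l + l}. g a) = (\<Sum>a\<in>{0..<l}. g (a + int t * l))"
    by (rule sum.reindex_bij_witness[of _ "\<lambda>a. a + int t * l" "\<lambda>a. a - int t * l"]) auto
  finally show ?case
    using Suc periodic_add_mult[of g l, OF per] by (simp add: algebra_simps)
qed simp

lemma sum_periodic_atLeastAtMost:
  fixes g :: "int \<Rightarrow> 'a::comm_ring_1"
  assumes per: "\<And>a. g (a + l) = g a" and "l > 0"
  shows "(\<Sum>a\<in>{0..int t * l}. g a) = g 0 + of_nat t * (\<Sum>a\<in>{0..<l}. g a)"
proof -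
  have "{0..int t * l} = insert (int t * l) {0..<int t * l}"
    using assms(2) by auto
  moreover have "g (int t * l) = g 0"
    using periodic_add_mult[of g l 0 t, OF per] by simp
  ultimately show ?thesis
    using sum_periodic_atLeastLessThan[of g l t, OF per] assms(2) by simp
qed

lemma sum_cube_periodic:
  fixes f :: "int \<Rightarrow> int \<Rightarrow> int \<Rightarrow> 'a::comm_ring_1"
  assumes "l > 0"
    and per: "\<And>a b c. f (a + l) b c = f a b c" "\<And>a b c. f a (b + l) c = f a b c"
      "\<And>a b c. f a b (c + l) = f a b c"
  shows "(\<Sum>a\<in>{0..int t * l}. \<Sum>b\<in>{0..int t * l}. \<Sum>c\<in>{0..int t * l}. f a b c) =
      f 0 0 0
    + of_nat t * ((\<Sum>a\<in>{0..<l}. f a 0 0) + (\<Sum>b\<in>{0..<l}. f 0 b 0) + (\<Sum>c\<in>{0..<l}. f 0 0 c))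
    + of_nat t ^ 2 * ((\<Sum>a\<in>{0..<l}. \<Sum>b\<in>{0..<l}. f a b 0) + (\<Sum>a\<in>{0..<l}. \<Sum>c\<in>{0..<l}. f a 0 c)
                   + (\<Sum>b\<in>{0..<l}. \<Sum>c\<in>{0..<l}. f 0 b c))
    + of_nat t ^ 3 * (\<Sum>a\<in>{0..<l}. \<Sum>b\<in>{0..<l}. \<Sum>c\<in>{0..<l}. f a b c)"
proof -
  define G where "G a b = f a b 0 + of_nat t * (\<Sum>c\<in>{0..<l}. f a b c)" for a b
  define K where "K a = G a 0 + of_nat t * (\<Sum>b\<in>{0..<l}. G a b)" for a
  have "(\<Sum>c\<in>{0..int t * l}. f a b c) = G a b" for a b
    unfolding G_def by (rule sum_periodic_atLeastAtMost) (simp_all add: per \<open>l > 0\<close>)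
  moreover have "(\<Sum>b\<in>{0..int t * l}. G a b) = K a" for a
    unfolding K_def by (rule sum_periodic_atLeastAtMost) (simp_all add: G_def per \<open>l > 0\<close>)
  moreover have "(\<Sum>a\<in>{0..int t * l}. K a) = K 0 + of_nat t * (\<Sum>a\<in>{0..<l}. K a)"
    by (rule sum_periodic_atLeastAtMost) (simp_all add: K_def G_def per \<open>l > 0\<close>)
  ultimately show ?thesis
    by (simp add: K_def G_def sum.distrib sum_distrib_left algebra_simps power2_eq_square power3_eq_cube)
qed

lemma sum_of_bool_eq_card_filter:
  assumes "finite A"
  shows "(\<Sum>a\<in>A. of_bool (P a)) = (of_nat (card {a \<in> A. P a}) :: 'c::semiring_1)"
  using assms by (simp add: sum.inter_filter[symmetric] of_bool_def)

lemma sum_sum_of_bool_eq_card_Sigma: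
  assumes "finite A" "finite B"
  shows "(\<Sum>a\<in>A. \<Sum>b\<in>B. of_bool (P a b)) = (of_nat (card (SIGMA a:A. {b \<in> B. P a b})) :: 'c::semiring_1)"
  using assms by (simp only: sum_of_bool_eq_card_filter card_SigmaI finite_Collect_conjI of_nat_sum) simp

lemma sum_sum_sum_of_bool_eq_card_Sigma:
  assumes "finite A" "finite B" "finite C"
  shows "(\<Sum>a\<in>A. \<Sum>b\<in>B. \<Sum>c\<in>C. of_bool (P a b c))
    = (of_nat (card (SIGMA a:A. SIGMA b:B. {c \<in> C. P a b c})) :: 'c::semiring_1)"
  using assms by (simp only: sum_sum_of_bool_eq_card_Sigma card_SigmaI finite_SigmaI of_nat_sum) simp

lemma mem_dilated_cube3_iff:
  "vec_of_int4 x \<in> (\<lambda>y. real t *\<^sub>R y) ` cube3 r \<longleftrightarrow>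
     (\<exists>s1 s2 s3. s1 \<in> {0..1} \<and> s2 \<in> {0..1} \<and> s3 \<in> {0..1} \<and>
        (\<forall>k. of_int (x $ k) = real t * (s1 * of_int (r 1 $ k) + s2 * of_int (r 2 $ k) + s3 * of_int (r 3 $ k))))"
proof -
  have "vec_of_int4 x \<in> (\<lambda>y. real t *\<^sub>R y) ` cube3 r \<longleftrightarrow>
     (\<exists>s1 s2 s3. s1 \<in> {0..1} \<and> s2 \<in> {0..1} \<and> s3 \<in> {0..1} \<and>
        vec_of_int4 x = real t *\<^sub>R (s1 *\<^sub>R vec_of_int4 (r 1) + s2 *\<^sub>R vec_of_int4 (r 2) + s3 *\<^sub>R vec_of_int4 (r 3)))"
    unfolding cube3_def by blast
  then show ?thesis
    by (simp add: vec_eq_iff vec_of_int4_def)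
qed

lemma idot_dilated_cube_point:
  assumes "\<And>k. of_int (x $ k) = real t * (s1 * of_int (u1 $ k) + s2 * of_int (u2 $ k) + s3 * of_int (u3 $ k))"
  shows "of_int (idot x v) = real t * (s1 * of_int (idot u1 v) + s2 * of_int (idot u2 v) + s3 * of_int (idot u3 v))"
proof -
  have "of_int (idot x v) = (\<Sum>k\<in>UNIV. of_int (x $ k) * (of_int (v $ k) :: real))"
    by (simp add: idot_def)
  also have "\<dots> = real t * (s1 * of_int (idot u1 v) + s2 * of_int (idot u2 v) + s3 * of_int (idot u3 v))"
    by (simp add: idot_def assms sum.distrib sum_distrib_left algebra_simps)
  finally show ?thesis .
qed

section \<open>Orthogonal frames\<close>

text \<open>The rows indexed by the type \<open>4\<close>, whose fourth element \<open>4\<close> is also \<open>0\<close>.\<close>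

definition frame :: "(nat \<Rightarrow> int ^ 4) \<Rightarrow> 4 \<Rightarrow> int ^ 4" where
  "frame r i = r (if i = 1 then 1 else if i = 2 then 2 else if i = 3 then 3 else 4)"

lemma frame_simps [simp]: "frame r 1 = r 1" "frame r 2 = r 2" "frame r 3 = r 3" "frame r 4 = r 4"
  by (simp_all add: frame_def)

locale orthogonal_frame =
  fixes l :: int and r :: "nat \<Rightarrow> int ^ 4"
  assumes l_pos: "l > 0"
    and orth: "\<And>i j. i \<in> {1..4} \<Longrightarrow> j \<in> {1..4} \<Longrightarrow> idot (r i) (r j) = (if i = j then l else 0)"
begin

abbreviation R :: "4 \<Rightarrow> int ^ 4" where
  "R \<equiv> frame r"

lemma frame_orth: "idot (R i) (R j) = (if i = j then l else 0)"
proof -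
  let ?n = "\<lambda>i :: 4. if i = 1 then 1 else if i = 2 then 2 else if i = 3 then 3 else 4 :: nat"
  have "?n i = ?n j \<longleftrightarrow> i = j"
    using exhaust_4[of i] exhaust_4[of j] by auto
  then show ?thesis
    unfolding frame_def by (subst orth) auto
qed

text \<open>A one-sided inverse of a square matrix is two-sided, so \<open>R R\<^sup>T = l I\<close> gives \<open>R\<^sup>T R = l I\<close>.\<close>

lemma frame_columns_orth: "(\<Sum>i\<in>UNIV. R i $ k * R i $ m) = (if k = m then l else 0)"
proof -
  define M :: "real ^ 4 ^ 4" where "M = (\<chi> i k. of_int (R i $ k))"
  have "(M ** ((1 / of_int l) *\<^sub>R transpose M)) $ i $ j = mat 1 $ i $ j" for i j
  proof -
    have "(M ** ((1 / of_int l) *\<^sub>R transpose M)) $ i $ j = (1 / of_int l) * of_int (idot (R i) (R j))"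
      by (simp add: matrix_matrix_mult_def transpose_def M_def idot_def sum_distrib_left)
    then show ?thesis
      using l_pos by (simp add: frame_orth mat_def)
  qed
  then have "M ** ((1 / of_int l) *\<^sub>R transpose M) = mat 1"
    by (simp add: vec_eq_iff)
  then have "((1 / of_int l) *\<^sub>R transpose M) ** M = mat 1"
    by (simp add: matrix_left_right_inverse)
  then have "(((1 / of_int l) *\<^sub>R transpose M) ** M) $ k $ m = mat 1 $ k $ m"
    by simp
  then have "(1 / of_int l) * of_int (\<Sum>i\<in>UNIV. R i $ k * R i $ m) = (if k = m then 1 else 0 :: real)"
    by (simp add: matrix_matrix_mult_def transpose_def M_def sum_distrib_left mat_def)
  then have "(of_int (\<Sum>i\<in>UNIV. R i $ k * R i $ m) :: real) = of_int (if k = m then l else 0)"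
    using l_pos by (auto simp: field_simps split: if_splits)
  then show ?thesis
    by (simp only: of_int_eq_iff)
qed

lemma frame_expansion: "(\<Sum>i\<in>UNIV. (\<Sum>m\<in>UNIV. x m * R i $ m) * R i $ k) = l * x k"
proof -
  have "(\<Sum>i\<in>UNIV. (\<Sum>m\<in>UNIV. x m * R i $ m) * R i $ k)
      = (\<Sum>i\<in>UNIV. \<Sum>m\<in>UNIV. x m * (R i $ m * R i $ k))"
    by (simp add: sum_distrib_right mult.assoc)
  also have "\<dots> = (\<Sum>m\<in>UNIV. x m * (\<Sum>i\<in>UNIV. R i $ m * R i $ k))"
    by (subst sum.swap) (simp add: sum_distrib_left)
  also have "\<dots> = (\<Sum>m\<in>UNIV. if m = k then l * x m else 0)"
    by (intro sum.cong) (simp_all add: frame_columns_orth)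
  also have "\<dots> = l * x k"
    by simp
  finally show ?thesis .
qed

lemma frame_coefficients: "(\<Sum>k\<in>UNIV. (\<Sum>i\<in>UNIV. y i * R i $ k) * R j $ k) = l * y j"
proof -
  have "(\<Sum>k\<in>UNIV. (\<Sum>i\<in>UNIV. y i * R i $ k) * R j $ k)
      = (\<Sum>k\<in>UNIV. \<Sum>i\<in>UNIV. y i * (R i $ k * R j $ k))"
    by (simp add: sum_distrib_right mult.assoc)
  also have "\<dots> = (\<Sum>i\<in>UNIV. y i * idot (R i) (R j))"
    by (subst sum.swap) (simp add: sum_distrib_left idot_def)
  also have "\<dots> = (\<Sum>i\<in>UNIV. if i = j then l * y i else 0)"
    by (intro sum.cong) (simp_all add: frame_orth)
  also have "\<dots> = l * y j"
    by simp
  finally show ?thesis .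
qed

definition row_solutions :: "(4 \<Rightarrow> int) set" where
  "row_solutions = {y \<in> residue_box l. \<forall>k. l dvd (\<Sum>i\<in>UNIV. y i * R i $ k)}"

definition column_solutions :: "(4 \<Rightarrow> int) set" where
  "column_solutions = {z \<in> residue_box l. \<forall>i. l dvd (\<Sum>k\<in>UNIV. z k * R i $ k)}"

lemma card_row_solutions_eq_card_column_solutions: "card row_solutions = card column_solutions"
  using card_kernel_mod_transpose[OF l_pos, of "\<lambda>i k. R i $ k"] l_pos
  by (simp add: row_solutions_def column_solutions_def)

definition row_map :: "(4 \<Rightarrow> int) \<Rightarrow> (4 \<Rightarrow> int)" where
  "row_map y = vec_mod l (\<lambda>k. \<Sum>i\<in>UNIV. y i * R i $ k)"

lemma row_map_vec_mod: "row_map (vec_mod l y) = row_map y"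
  unfolding row_map_def vec_mod_def by (simp add: sum_mod_mult_mod fun_eq_iff)

lemma row_map_image: "row_map ` residue_box l = column_solutions"
proof (intro equalityI subsetI)
  fix z assume "z \<in> row_map ` residue_box l"
  then obtain y where z: "z = row_map y"
    by blast
  have "(\<Sum>k\<in>UNIV. z k * R j $ k) mod l = (\<Sum>k\<in>UNIV. (\<Sum>i\<in>UNIV. y i * R i $ k) * R j $ k) mod l" for j
    unfolding z row_map_def vec_mod_def by (rule sum_mod_mult_mod)
  then have "l dvd (\<Sum>k\<in>UNIV. z k * R j $ k)" for j
    by (simp add: frame_coefficients dvd_eq_mod_eq_0)
  moreover have "z \<in> residue_box l"
    unfolding z row_map_def by (rule vec_mod_in_residue_box[OF l_pos])
  ultimately show "z \<in> column_solutions"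
    by (simp add: column_solutions_def)
next
  fix z assume z: "z \<in> column_solutions"
  define y where "y i = (\<Sum>m\<in>UNIV. z m * R i $ m) div l" for i
  have "l * y i = (\<Sum>m\<in>UNIV. z m * R i $ m)" for i
    using z by (simp add: column_solutions_def y_def)
  then have "l * (\<Sum>i\<in>UNIV. y i * R i $ k) = l * z k" for k
    by (simp add: sum_distrib_left mult.assoc[symmetric] frame_expansion)
  then have "(\<Sum>i\<in>UNIV. y i * R i $ k) = z k" for k
    using l_pos by simp
  then have "row_map (vec_mod l y) = z"
    using z by (subst row_map_vec_mod) (simp add: row_map_def column_solutions_def vec_mod_residue_box)
  then show "z \<in> row_map ` residue_box l"
    using vec_mod_in_residue_box[OF l_pos] by blast
qed

lemma card_column_solutions_mult_card_row_solutions: "card column_solutions * card row_solutions = nat l ^ 4"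
proof -
  have "card (residue_box l :: (4 \<Rightarrow> int) set)
      = card (row_map ` residue_box l) * card {y \<in> residue_box l. row_map y = row_map 0}"
  proof (rule card_eq_card_image_mult_card_kernel)
    fix y h :: "4 \<Rightarrow> int"
    show "vec_mod l (y + h) \<in> residue_box l" "vec_mod l (y - h) \<in> residue_box l"
      using vec_mod_in_residue_box[OF l_pos] by auto
    have eq: "row_map (vec_mod l (y - h)) = vec_mod l (\<lambda>k. (\<Sum>i\<in>UNIV. y i * R i $ k) - (\<Sum>i\<in>UNIV. h i * R i $ k))"
      by (subst row_map_vec_mod) (simp add: row_map_def sum_subtractf left_diff_distrib)
    show "row_map (vec_mod l (y - h)) = row_map 0 \<longleftrightarrow> row_map y = row_map h"
      unfolding eq by (simp add: row_map_def vec_mod_def fun_eq_iff mod_eq_dvd_iff dvd_eq_mod_eq_0[symmetric])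
  qed simp
  moreover have "{y \<in> residue_box l. row_map y = row_map 0} = row_solutions"
    by (auto simp: row_solutions_def row_map_def vec_mod_def fun_eq_iff dvd_eq_mod_eq_0)
  moreover have "card (residue_box l :: (4 \<Rightarrow> int) set) = nat l ^ 4"
    by (simp add: card_residue_box)
  ultimately show ?thesis
    using row_map_image by simp
qed

text \<open>
  \<open>y \<mapsto> y R mod l\<close> maps \<open>(\<int>/l)\<^sup>4\<close> onto the column solutions with the row solutions as kernel,
  and the character sum duality makes both solution sets equally large.
\<close>

lemma card_row_solutions: "card row_solutions = nat l ^ 2"
proof -
  have "card row_solutions ^ 2 = nat l ^ 4"
    using card_column_solutions_mult_card_row_solutions card_row_solutions_eq_card_column_solutions
    by (simp add: power2_eq_square)
  also have "\<dots> = (nat l ^ 2) ^ 2"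
    by (simp flip: power_mult)
  finally have "card row_solutions ^ 2 = (nat l ^ 2) ^ 2" .
  then show ?thesis
    by (rule power_eq_imp_eq_base) auto
qed

lemma row_solutions_vec_mod:
  assumes "\<And>k. l dvd (\<Sum>i\<in>UNIV. y i * R i $ k)"
  shows "vec_mod l y \<in> row_solutions"
proof -
  have "(\<Sum>i\<in>UNIV. vec_mod l y i * R i $ k) mod l = 0" for k
    using assms[of k] by (simp add: vec_mod_def sum_mod_mult_mod dvd_eq_mod_eq_0)
  then show ?thesis
    using vec_mod_in_residue_box[OF l_pos] by (simp add: row_solutions_def dvd_eq_mod_eq_0)
qed

lemma row_solutions_add_diff:
  assumes "y \<in> row_solutions" "h \<in> row_solutions"
  shows "vec_mod l (y + h) \<in> row_solutions" "vec_mod l (y - h) \<in> row_solutions"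
proof -
  have "l dvd (\<Sum>i\<in>UNIV. y i * R i $ k)" "l dvd (\<Sum>i\<in>UNIV. h i * R i $ k)" for k
    using assms by (simp_all add: row_solutions_def)
  then show "vec_mod l (y + h) \<in> row_solutions" "vec_mod l (y - h) \<in> row_solutions"
    by (auto intro!: row_solutions_vec_mod simp: sum.distrib sum_subtractf distrib_right left_diff_distrib)
qed

lemma last_coordinate_row_solutions:
  "(\<lambda>y. y 4) ` row_solutions = {v \<in> {0..<l}. Dgcd (r 4) dvd v}"
proof (intro equalityI subsetI)
  fix v assume "v \<in> (\<lambda>y. y 4) ` row_solutions"
  then obtain y where y: "y \<in> row_solutions" "v = y 4"
    by blast
  define u where "u k = (\<Sum>i\<in>UNIV. y i * R i $ k) div l" for k
  have "l * u k = (\<Sum>i\<in>UNIV. y i * R i $ k)" for k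
    using y by (simp add: row_solutions_def u_def)
  then have "l * (\<Sum>k\<in>UNIV. u k * R 4 $ k) = l * y 4"
    using frame_coefficients[of y 4] by (simp add: sum_distrib_left mult.assoc[symmetric])
  then have "(\<Sum>k\<in>UNIV. u k * r 4 $ k) = v"
    using l_pos y(2) by simp
  moreover have "Dgcd (r 4) dvd (\<Sum>k\<in>UNIV. u k * r 4 $ k)"
    by (intro dvd_sum dvd_mult Dgcd_dvd)
  moreover have "0 \<le> v" "v < l"
    using y by (auto simp: row_solutions_def residue_box_def)
  ultimately show "v \<in> {v \<in> {0..<l}. Dgcd (r 4) dvd v}"
    by simp
next
  fix v assume "v \<in> {v \<in> {0..<l}. Dgcd (r 4) dvd v}"
  then obtain n where v: "0 \<le> v" "v < l" "v = Dgcd (r 4) * n"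
    by auto
  obtain w :: "int ^ 4" where w: "(\<Sum>k\<in>UNIV. w $ k * r 4 $ k) = Dgcd (r 4)"
    using Dgcd_bezout by blast
  define y where "y = vec_mod l (\<lambda>i. \<Sum>m\<in>UNIV. n * w $ m * R i $ m)"
  have "y \<in> row_solutions"
    unfolding y_def by (rule row_solutions_vec_mod) (simp add: frame_expansion)
  moreover have "y 4 = v"
    using w v by (simp add: y_def vec_mod_def sum_distrib_left[symmetric] mult.assoc mult.commute)
  ultimately show "v \<in> (\<lambda>y. y 4) ` row_solutions"
    by blast
qed

lemma card_row_solutions_last_zero: "card {y \<in> row_solutions. y 4 = 0} = nat (l * Dgcd (r 4))"
proof -
  define D where "D = Dgcd (r 4)"
  have D: "D > 0" "D dvd l"
    using Dgcd_pos_dvd_idot_self[OF _ l_pos, of "r 4"] orth[of 4 4] by (auto simp: D_def)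
  have "card row_solutions = card ((\<lambda>y. y 4) ` row_solutions) * card {y \<in> row_solutions. y 4 = (0 :: 4 \<Rightarrow> int) 4}"
  proof (rule card_eq_card_image_mult_card_kernel)
    fix y h assume yh: "y \<in> row_solutions" "h \<in> row_solutions"
    then show "vec_mod l (y + h) \<in> row_solutions" "vec_mod l (y - h) \<in> row_solutions"
      by (rule row_solutions_add_diff)+
    have "0 \<le> y 4" "y 4 < l" "0 \<le> h 4" "h 4 < l"
      using yh by (auto simp: row_solutions_def residue_box_def)
    then show "vec_mod l (y - h) 4 = (0 :: 4 \<Rightarrow> int) 4 \<longleftrightarrow> y 4 = h 4"
      by (simp add: vec_mod_def mod_diff_eq_0_iff_eq)
  qed (auto simp: row_solutions_def)
  also have "card ((\<lambda>y. y 4) ` row_solutions) = nat (l div D)"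
    unfolding last_coordinate_row_solutions D_def[symmetric]
    using card_congruence_class[of D l 0] D by simp
  finally have "nat l ^ 2 = nat (l div D) * card {y \<in> row_solutions. y 4 = 0}"
    by (simp add: card_row_solutions)
  then have "int (nat l ^ 2) = int (nat (l div D)) * int (card {y \<in> row_solutions. y 4 = 0})"
    by (simp only: of_nat_mult)
  moreover have "int (nat l ^ 2) = (l div D) * (l * D)" "int (nat (l div D)) = l div D"
    using l_pos D by (simp_all add: power2_eq_square pos_imp_zdiv_nonneg_iff)
  moreover have "l div D \<noteq> 0"
    using l_pos D by (auto simp: dvd_div_eq_0_iff)
  ultimately have "int (card {y \<in> row_solutions. y 4 = 0}) = l * D"
    by simp
  then show ?thesis
    by (simp add: D_def)
qed

definition integral_combination :: "int \<Rightarrow> int \<Rightarrow> int \<Rightarrow> bool" where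
  "integral_combination a b c \<longleftrightarrow> (\<forall>k. l dvd a * r 1 $ k + b * r 2 $ k + c * r 3 $ k)"

lemma row_expansion:
  "l * x $ k = idot x (r 1) * r 1 $ k + idot x (r 2) * r 2 $ k + idot x (r 3) * r 3 $ k + idot x (r 4) * r 4 $ k"
  using frame_expansion[of "\<lambda>m. x $ m" k] by (simp add: idot_def sum_4)

lemma idot_rows_of_combination:
  assumes "\<And>k. l * x $ k = a * r 1 $ k + b * r 2 $ k + c * r 3 $ k"
  shows "idot x (r 1) = a" "idot x (r 2) = b" "idot x (r 3) = c" "idot x (r 4) = 0"
proof -
  have dot: "l * idot x (r j) = a * idot (r 1) (r j) + b * idot (r 2) (r j) + c * idot (r 3) (r j)" for j
  proof -
    have "l * idot x (r j) = (\<Sum>k\<in>UNIV. (l * x $ k) * r j $ k)"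
      by (simp add: idot_def sum_distrib_left mult.assoc)
    also have "\<dots> = (\<Sum>k\<in>UNIV. (a * r 1 $ k + b * r 2 $ k + c * r 3 $ k) * r j $ k)"
      using assms by simp
    also have "\<dots> = a * idot (r 1) (r j) + b * idot (r 2) (r j) + c * idot (r 3) (r j)"
      by (simp add: idot_def sum.distrib sum_distrib_left algebra_simps)
    finally show ?thesis .
  qed
  show "idot x (r 1) = a" "idot x (r 2) = b" "idot x (r 3) = c" "idot x (r 4) = 0"
    using dot[of 1] dot[of 2] dot[of 3] dot[of 4] orth l_pos by simp_all
qed

lemma lattice_point_idot_bounds:
  assumes "vec_of_int4 x \<in> (\<lambda>y. real t *\<^sub>R y) ` cube3 r"
  shows "idot x (r 4) = 0" "i \<in> {1, 2, 3} \<Longrightarrow> idot x (r i) \<in> {0..int t * l}"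
proof -
  obtain s1 s2 s3 where s: "s1 \<in> {0..1}" "s2 \<in> {0..1}" "s3 \<in> {0..1}"
    and x: "\<And>k. of_int (x $ k) = real t * (s1 * of_int (r 1 $ k) + s2 * of_int (r 2 $ k) + s3 * of_int (r 3 $ k))"
    using assms unfolding mem_dilated_cube3_iff by blast
  note dot = idot_dilated_cube_point[OF x]
  show "idot x (r 4) = 0"
    using dot[of "r 4"] orth by simp
  have bound: "idot x (r j) \<in> {0..int t * l}"
    if "real_of_int (idot x (r j)) = real t * (s * of_int l)" "s \<in> {0..1}" for j s
  proof -
    have "0 \<le> real t * (s * of_int l)" "real t * (s * of_int l) \<le> real t * of_int l"
      using that(2) l_pos by (simp_all add: mult_left_mono mult_left_le_one_le)
    then have "0 \<le> real_of_int (idot x (r j))" "real_of_int (idot x (r j)) \<le> real_of_int (int t * l)"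
      using that(1) by simp_all
    then show ?thesis
      by (simp only: atLeastAtMost_iff of_int_le_iff of_int_0_le_iff)
  qed
  have "idot x (r 1) \<in> {0..int t * l}" "idot x (r 2) \<in> {0..int t * l}" "idot x (r 3) \<in> {0..int t * l}"
    by (intro bound[OF _ s(1)] bound[OF _ s(2)] bound[OF _ s(3)]; use dot orth in simp)+
  then show "i \<in> {1, 2, 3} \<Longrightarrow> idot x (r i) \<in> {0..int t * l}"
    by auto
qed

lemma lattice_point_of_idot_bounds:
  assumes "t > 0" "idot x (r 4) = 0" and bounds: "\<And>i. i \<in> {1, 2, 3} \<Longrightarrow> idot x (r i) \<in> {0..int t * l}"
  shows "vec_of_int4 x \<in> (\<lambda>y. real t *\<^sub>R y) ` cube3 r"
proof -
  define s where "s i = real_of_int (idot x (r i)) / (real t * l)" for i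
  have s01: "s i \<in> {0..1}" if "i \<in> {1, 2, 3}" for i
  proof -
    have "0 \<le> idot x (r i)" "idot x (r i) \<le> int t * l"
      using bounds[OF that] by auto
    then have "0 \<le> real_of_int (idot x (r i))" "real_of_int (idot x (r i)) \<le> real t * of_int l"
      by (metis of_int_0_le_iff, metis of_int_le_iff of_int_mult of_int_of_nat_eq)
    then show ?thesis
      using assms(1) l_pos by (simp add: s_def divide_le_eq_1)
  qed
  have xk: "of_int (x $ k) = real t * (s 1 * of_int (r 1 $ k) + s 2 * of_int (r 2 $ k) + s 3 * of_int (r 3 $ k))" for k
  proof -
    have "real t * (s 1 * of_int (r 1 $ k) + s 2 * of_int (r 2 $ k) + s 3 * of_int (r 3 $ k))
        = of_int (idot x (r 1) * r 1 $ k + idot x (r 2) * r 2 $ k + idot x (r 3) * r 3 $ k) / of_int l"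
      using assms(1) l_pos by (simp add: s_def field_simps)
    also have "\<dots> = of_int (l * x $ k) / of_int l"
      using row_expansion[of x k] assms(2) by (simp only:) simp
    also have "\<dots> = of_int (x $ k)"
      using l_pos by simp
    finally show ?thesis
      by (rule sym)
  qed
  show ?thesis
    unfolding mem_dilated_cube3_iff using s01[of 1] s01[of 2] s01[of 3] xk by blast
qed

lemma lattice_point_iff:
  assumes "t > 0"
  shows "vec_of_int4 x \<in> (\<lambda>y. real t *\<^sub>R y) ` cube3 r \<longleftrightarrow>
    idot x (r 4) = 0 \<and> (\<forall>i\<in>{1, 2, 3}. idot x (r i) \<in> {0..int t * l})"
  using lattice_point_idot_bounds lattice_point_of_idot_bounds[OF assms] by blast

lemma integral_combination_periodic:
  "integral_combination (a + l) b c = integral_combination a b c"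
  "integral_combination a (b + l) c = integral_combination a b c"
  "integral_combination a b (c + l) = integral_combination a b c"
proof -
  let ?s = "\<lambda>k. a * r 1 $ k + b * r 2 $ k + c * r 3 $ k"
  have "(a + l) * r 1 $ k + b * r 2 $ k + c * r 3 $ k = ?s k + r 1 $ k * l"
    "a * r 1 $ k + (b + l) * r 2 $ k + c * r 3 $ k = ?s k + r 2 $ k * l"
    "a * r 1 $ k + b * r 2 $ k + (c + l) * r 3 $ k = ?s k + r 3 $ k * l" for k
    by (simp_all add: algebra_simps)
  then show "integral_combination (a + l) b c = integral_combination a b c"
    "integral_combination a (b + l) c = integral_combination a b c"
    "integral_combination a b (c + l) = integral_combination a b c"
    unfolding integral_combination_def by (simp_all only: dvd_add_times_triv_right_iff)
qed

lemma lattice_count_eq_card_triples: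
  assumes "t > 0"
  shows "lattice_count (cube3 r) t = card (SIGMA a:{0..int t * l}. SIGMA b:{0..int t * l}.
    {c \<in> {0..int t * l}. integral_combination a b c})"
proof -
  let ?I = "{0..int t * l}"
  let ?X = "{x. idot x (r 4) = 0 \<and> (\<forall>i\<in>{1, 2, 3}. idot x (r i) \<in> ?I)}"
  let ?T = "SIGMA a:?I. SIGMA b:?I. {c \<in> ?I. integral_combination a b c}"
  have "bij_betw (\<lambda>x. (idot x (r 1), idot x (r 2), idot x (r 3))) ?X ?T"
  proof (rule bij_betw_byWitness[where f' = "\<lambda>(a, b, c). \<chi> k. (a * r 1 $ k + b * r 2 $ k + c * r 3 $ k) div l"])
    have x: "idot x (r 1) * r 1 $ k + idot x (r 2) * r 2 $ k + idot x (r 3) * r 3 $ k = l * x $ k"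
      if "x \<in> ?X" for x k
      using row_expansion[of x k] that by simp
    show "\<forall>x\<in>?X. (\<lambda>(a, b, c). \<chi> k. (a * r 1 $ k + b * r 2 $ k + c * r 3 $ k) div l)
        (idot x (r 1), idot x (r 2), idot x (r 3)) = x"
      using x l_pos by (simp add: vec_eq_iff)
    show "(\<lambda>x. (idot x (r 1), idot x (r 2), idot x (r 3))) ` ?X \<subseteq> ?T"
      using x by (auto simp: integral_combination_def)
    have y: "l * (\<chi> k. (a * r 1 $ k + b * r 2 $ k + c * r 3 $ k) div l) $ k = a * r 1 $ k + b * r 2 $ k + c * r 3 $ k"
      if "integral_combination a b c" for a b c k
      using that by (simp add: integral_combination_def)
    show "\<forall>p\<in>?T. (\<lambda>x. (idot x (r 1), idot x (r 2), idot x (r 3)))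
        ((\<lambda>(a, b, c). \<chi> k. (a * r 1 $ k + b * r 2 $ k + c * r 3 $ k) div l) p) = p"
      using idot_rows_of_combination[OF y] by auto
    show "(\<lambda>(a, b, c). \<chi> k. (a * r 1 $ k + b * r 2 $ k + c * r 3 $ k) div l) ` ?T \<subseteq> ?X"
      using idot_rows_of_combination[OF y] by auto
  qed
  then have "card ?X = card ?T"
    by (rule bij_betw_same_card)
  then show ?thesis
    unfolding lattice_count_def lattice_point_iff[OF assms] by simp
qed

lemma sum_edge_eq_Dgcd:
  assumes "i \<in> {1..4}"
  shows "(\<Sum>a\<in>{0..<l}. of_bool (\<forall>k. l dvd a * r i $ k)) = Dgcd (r i)"
proof -
  have "Dgcd (r i) dvd l"
    using Dgcd_pos_dvd_idot_self[OF _ l_pos] orth[OF assms assms] by simp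
  then have "card {a \<in> {0..<l}. \<forall>k. l dvd (0 :: int ^ 4) $ k + a * r i $ k} = nat (Dgcd (r i))"
    using card_coset_solutions[OF l_pos, of "r i" 0 0] by simp
  then show ?thesis
    using Dgcd_nonneg[of "r i"] by (simp add: sum_of_bool_eq_card_filter del: sum_of_bool_eq)
qed

lemma sum_face_eq_zeta:
  assumes "i \<in> {1..4}" "j \<in> {1..4}" "i \<noteq> j"
  shows "(\<Sum>a\<in>{0..<l}. \<Sum>b\<in>{0..<l}. of_bool (\<forall>k. l dvd a * r i $ k + b * r j $ k)) = zeta (r i) (r j)"
proof -
  have "(\<Sum>a\<in>{0..<l}. \<Sum>b\<in>{0..<l}. of_bool (\<forall>k. l dvd a * r i $ k + b * r j $ k))
      = int (card (SIGMA a:{0..<l}. {b \<in> {0..<l}. \<forall>k. l dvd a * r i $ k + b * r j $ k}))"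
    by (rule sum_sum_of_bool_eq_card_Sigma) simp_all
  then show ?thesis
    using card_face_solutions[OF l_pos, of "r i" "r j"] orth[OF assms(1,1)] orth[OF assms(2,2)]
      orth[OF assms(1,2)] assms(3) zeta_nonneg[of "r i" "r j"]
    by simp
qed

lemma sum_cube_eq: "(\<Sum>a\<in>{0..<l}. \<Sum>b\<in>{0..<l}. \<Sum>c\<in>{0..<l}. of_bool (integral_combination a b c)) = l * Dgcd (r 4)"
proof -
  let ?T = "SIGMA a:{0..<l}. SIGMA b:{0..<l}. {c \<in> {0..<l}. integral_combination a b c}"
  define emb :: "int \<times> int \<times> int \<Rightarrow> 4 \<Rightarrow> int"
    where "emb = (\<lambda>(a, b, c) k. if k = 1 then a else if k = 2 then b else if k = 3 then c else 0)"
  have row_sol: "y \<in> row_solutions \<longleftrightarrow> (\<forall>k. 0 \<le> y k \<and> y k < l) \<and>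
      (\<forall>k. l dvd y 1 * r 1 $ k + y 2 * r 2 $ k + y 3 * r 3 $ k + y 4 * r 4 $ k)" for y
    by (simp add: row_solutions_def residue_box_def sum_4)
  have "bij_betw emb ?T {y \<in> row_solutions. y 4 = 0}"
  proof (rule bij_betw_byWitness[where f' = "\<lambda>y. (y 1, y 2, y 3)"])
    show "\<forall>p\<in>?T. (emb p 1, emb p 2, emb p 3) = p"
      by (auto simp: emb_def)
    show "\<forall>y\<in>{y \<in> row_solutions. y 4 = 0}. emb (y 1, y 2, y 3) = y"
      by (auto simp: emb_def fun_eq_iff) (metis exhaust_4)
    show "emb ` ?T \<subseteq> {y \<in> row_solutions. y 4 = 0}"
    proof
      fix y assume "y \<in> emb ` ?T"
      then obtain a b c where abc: "(a, b, c) \<in> ?T" "y = emb (a, b, c)"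
        by auto
      have "0 \<le> y k \<and> y k < l" for k
        using exhaust_4[of k] abc l_pos by (auto simp: emb_def)
      then show "y \<in> {y \<in> row_solutions. y 4 = 0}"
        using abc by (auto simp: row_sol emb_def integral_combination_def)
    qed
    show "(\<lambda>y. (y 1, y 2, y 3)) ` {y \<in> row_solutions. y 4 = 0} \<subseteq> ?T"
      by (auto simp: row_sol integral_combination_def)
  qed
  then have "card ?T = card {y \<in> row_solutions. y 4 = 0}"
    by (rule bij_betw_same_card)
  then show ?thesis
    using card_row_solutions_last_zero l_pos Dgcd_nonneg[of "r 4"]
    by (subst sum_sum_sum_of_bool_eq_card_Sigma) simp_all
qed

end

theorem theorem2p15:
  fixes l :: int and r :: "nat \<Rightarrow> int ^ 4" and t :: nat
  assumes "l > 0"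
    and "\<And>i j. i \<in> {1..4} \<Longrightarrow> j \<in> {1..4} \<Longrightarrow>
           idot (r i) (r j) = (if i = j then l else 0)"
    and "t > 0"
  shows "int (lattice_count (cube3 r) t) =
           l * Dgcd (r 4) * int t ^ 3
         + (zeta (r 1) (r 2) + zeta (r 1) (r 3) + zeta (r 2) (r 3)) * int t ^ 2
         + (Dgcd (r 1) + Dgcd (r 2) + Dgcd (r 3)) * int t + 1"
proof -
  interpret orthogonal_frame l r
    using assms(1,2) by unfold_locales
  let ?f = "\<lambda>a b c. of_bool (integral_combination a b c) :: int"
  have "int (lattice_count (cube3 r) t)
      = (\<Sum>a\<in>{0..int t * l}. \<Sum>b\<in>{0..int t * l}. \<Sum>c\<in>{0..int t * l}. ?f a b c)"
    by (subst sum_sum_sum_of_bool_eq_card_Sigma) (simp_all add: lattice_count_eq_card_triples[OF assms(3)])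
  also have "\<dots> = ?f 0 0 0
    + int t * ((\<Sum>a\<in>{0..<l}. ?f a 0 0) + (\<Sum>b\<in>{0..<l}. ?f 0 b 0) + (\<Sum>c\<in>{0..<l}. ?f 0 0 c))
    + int t ^ 2 * ((\<Sum>a\<in>{0..<l}. \<Sum>b\<in>{0..<l}. ?f a b 0) + (\<Sum>a\<in>{0..<l}. \<Sum>c\<in>{0..<l}. ?f a 0 c)
                   + (\<Sum>b\<in>{0..<l}. \<Sum>c\<in>{0..<l}. ?f 0 b c))
    + int t ^ 3 * (\<Sum>a\<in>{0..<l}. \<Sum>b\<in>{0..<l}. \<Sum>c\<in>{0..<l}. ?f a b c)"
    by (rule sum_cube_periodic) (simp_all add: assms(1) integral_combination_periodic)
  also have "\<dots> = 1 + int t * (Dgcd (r 1) + Dgcd (r 2) + Dgcd (r 3))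
    + int t ^ 2 * (zeta (r 1) (r 2) + zeta (r 1) (r 3) + zeta (r 2) (r 3)) + int t ^ 3 * (l * Dgcd (r 4))"
    using sum_edge_eq_Dgcd[of 1] sum_edge_eq_Dgcd[of 2] sum_edge_eq_Dgcd[of 3]
      sum_face_eq_zeta[of 1 2] sum_face_eq_zeta[of 1 3] sum_face_eq_zeta[of 2 3]
    by (simp only: sum_cube_eq) (simp add: integral_combination_def)
  finally show ?thesis
    by (simp add: algebra_simps)
qed

end
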